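(* Let $p\in(1,\infty)$. In the Banach space $\ell_p$ every closed convex cone has a convex polar if and only if $p=2$. More specifically, for $p\neq 2$ there exist wedges in $\ell_p$ (already in a three-dimensional coordinate subspace $\ell_p^3$) whose polars are not convex.
   Context: $\ell_p$ is the real sequence space with norm $\|z\|_p=(\sum_i|z_i|^p)^{1/p}$; its dual is $\ell_q$ with $q=p/(p-1)$ and the usual pairing. The normalized duality map $J:X\to X^*$ of a Banach space is defined by $\langle Jx,x\rangle=\|Jx\|_{X^*}\|x\|=\|x\|^2=\|Jx\|_{X^*}^2$. For a closed convex cone $K$, the metric projection is $P_Kx=\operatorname{argmin}\{\|x-k\|:k\in K\}$ and the polar is $K^\circ=\{x:P_Kx=0\}$. With $S^*$ the dual unit sphere, for $a,b\in S^*$, $b\notin\{a,-a\}$, $\delta(a,b)=\{(\lambda a+\mu b)/\|\lambda a+\mu b\|:\lambda,\mu\ge0,(\lambda,\mu)\ne(0,0)\}$ and the wedge is $W(a,b)=\{x:\langle c,x\rangle\le 0\ \forall c\in\delta(a,b)\}$. *)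

theory Defs
  imports "HOL-Analysis.Analysis"
begin

text \<open>Real sequence spaces l_p(I): sequences indexed by nat that vanish outside the
index set I (I = UNIV gives l_p, I = {0,1,2} gives l_p^3).\<close>

definition lp :: "real \<Rightarrow> nat set \<Rightarrow> (nat \<Rightarrow> real) set" where
  "lp p I = {z. (\<forall>i. i \<notin> I \<longrightarrow> z i = 0) \<and> summable (\<lambda>i. \<bar>z i\<bar> powr p)}"

definition lpnorm :: "real \<Rightarrow> (nat \<Rightarrow> real) \<Rightarrow> real" where
  "lpnorm p z = (\<Sum>i. \<bar>z i\<bar> powr p) powr (1 / p)"

definition conj_exp :: "real \<Rightarrow> real" where
  "conj_exp p = p / (p - 1)"

definition pairing :: "(nat \<Rightarrow> real) \<Rightarrow> (nat \<Rightarrow> real) \<Rightarrow> real" where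
  "pairing c x = (\<Sum>i. c i * x i)"

definition lp_closed :: "real \<Rightarrow> nat set \<Rightarrow> (nat \<Rightarrow> real) set \<Rightarrow> bool" where
  "lp_closed p I K \<longleftrightarrow>
     (\<forall>(xs :: nat \<Rightarrow> nat \<Rightarrow> real) x. (\<forall>n. xs n \<in> K) \<and> x \<in> lp p I \<and>
        (\<lambda>n. lpnorm p (\<lambda>i. xs n i - x i)) \<longlonglongrightarrow> 0 \<longrightarrow> x \<in> K)"

definition lconvex :: "(nat \<Rightarrow> real) set \<Rightarrow> bool" where
  "lconvex S \<longleftrightarrow> (\<forall>x\<in>S. \<forall>y\<in>S. \<forall>t::real. 0 \<le> t \<and> t \<le> 1 \<longrightarrow>
                      (\<lambda>i. t * x i + (1 - t) * y i) \<in> S)"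

definition lcone :: "(nat \<Rightarrow> real) set \<Rightarrow> bool" where
  "lcone K \<longleftrightarrow> K \<noteq> {} \<and> (\<forall>x\<in>K. \<forall>t::real. 0 \<le> t \<longrightarrow> (\<lambda>i. t * x i) \<in> K)"

definition closed_convex_cone :: "real \<Rightarrow> nat set \<Rightarrow> (nat \<Rightarrow> real) set \<Rightarrow> bool" where
  "closed_convex_cone p I K \<longleftrightarrow> K \<subseteq> lp p I \<and> lp_closed p I K \<and> lconvex K \<and> lcone K"

definition metric_proj :: "real \<Rightarrow> (nat \<Rightarrow> real) set \<Rightarrow> (nat \<Rightarrow> real) \<Rightarrow> (nat \<Rightarrow> real) set" where
  "metric_proj p K x = {k \<in> K. \<forall>k'\<in>K. lpnorm p (\<lambda>i. x i - k i) \<le> lpnorm p (\<lambda>i. x i - k' i)}"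

definition polar :: "real \<Rightarrow> nat set \<Rightarrow> (nat \<Rightarrow> real) set \<Rightarrow> (nat \<Rightarrow> real) set" where
  "polar p I K = {x \<in> lp p I. metric_proj p K x = {(\<lambda>i. 0)}}"

definition dual_sphere :: "real \<Rightarrow> nat set \<Rightarrow> (nat \<Rightarrow> real) set" where
  "dual_sphere p I = {c \<in> lp (conj_exp p) I. lpnorm (conj_exp p) c = 1}"

definition delta :: "real \<Rightarrow> (nat \<Rightarrow> real) \<Rightarrow> (nat \<Rightarrow> real) \<Rightarrow> (nat \<Rightarrow> real) set" where
  "delta p a b = {(\<lambda>i. (l * a i + m * b i) / lpnorm (conj_exp p) (\<lambda>j. l * a j + m * b j)) | l m.
                    l \<ge> 0 \<and> m \<ge> 0 \<and> (l, m) \<noteq> (0, 0)}"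

definition wedge :: "real \<Rightarrow> nat set \<Rightarrow> (nat \<Rightarrow> real) \<Rightarrow> (nat \<Rightarrow> real) \<Rightarrow> (nat \<Rightarrow> real) set" where
  "wedge p I a b = {x \<in> lp p I. \<forall>c \<in> delta p a b. pairing c x \<le> 0}"

end

theory Submission
  imports Defs
begin

text \<open>
  In \<open>l\<^sub>2\<close> the nearest point of a cone \<open>K\<close> to \<open>x\<close> is \<open>0\<close> exactly when
  \<open>\<langle>x, k\<rangle> \<le> 0\<close> for all \<open>k \<in> K\<close>, because \<open>\<parallel>x - t k\<parallel>\<^sup>2 = \<parallel>x\<parallel>\<^sup>2 - 2 t \<langle>x, k\<rangle> + t\<^sup>2 \<parallel>k\<parallel>\<^sup>2\<close>;
  so the polar is an intersection of half-spaces and hence convex.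

  For \<open>p \<noteq> 2\<close> take the wedge \<open>W = {x. x\<^sub>0 + x\<^sub>1 \<le> 0, x\<^sub>1 + x\<^sub>2 \<le> 0}\<close>, generated by the
  normalised functionals on \<open>(1,1,0)\<close> and \<open>(0,1,1)\<close>. The strict Bernoulli inequality
  \<open>\<bar>1 - s\<bar>\<^sup>p > 1 - p s\<close> (for \<open>s \<noteq> 0\<close>) shows that \<open>0\<close> is the unique nearest point of \<open>W\<close> to
  \<open>(1,1,0)\<close> and to \<open>(0,1,1)\<close>. Their midpoint \<open>(1/2,1,1/2)\<close> is not in the polar: the points
  \<open>(u,-u,u)\<close> lie in \<open>W\<close>, and \<open>u \<mapsto> \<parallel>(1/2,1,1/2) - (u,-u,u)\<parallel>\<^sub>p\<^sup>p\<close> has derivative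
  \<open>p (1 - 2\<^sup>2\<^sup>-\<^sup>p)\<close> at \<open>u = 0\<close>, which vanishes only for \<open>p = 2\<close>.
\<close>


definition lpsum :: "real \<Rightarrow> (nat \<Rightarrow> real) \<Rightarrow> real" where
  "lpsum p z = (\<Sum>i. \<bar>z i\<bar> powr p)"

lemma lpnorm_eq_lpsum: "lpnorm p z = lpsum p z powr (1 / p)"
  unfolding lpnorm_def lpsum_def ..

lemma lpsum_nonneg: "summable (\<lambda>i. \<bar>z i\<bar> powr p) \<Longrightarrow> 0 \<le> lpsum p z"
  unfolding lpsum_def by (rule suminf_nonneg) auto

lemma lpsum_pos:
  assumes "summable (\<lambda>i. \<bar>z i\<bar> powr p)" and "z \<noteq> (\<lambda>i. 0)"
  shows "0 < lpsum p z"
  using assms unfolding lpsum_def by (subst suminf_pos_iff) auto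

lemma lpnorm_less_iff:
  assumes "0 < p" and "summable (\<lambda>i. \<bar>x i\<bar> powr p)" and "summable (\<lambda>i. \<bar>y i\<bar> powr p)"
  shows "lpnorm p x < lpnorm p y \<longleftrightarrow> lpsum p x < lpsum p y"
proof
  assume "lpsum p x < lpsum p y"
  then show "lpnorm p x < lpnorm p y"
    unfolding lpnorm_eq_lpsum using assms lpsum_nonneg by (intro powr_less_mono2) auto
next
  assume "lpnorm p x < lpnorm p y"
  moreover have "lpsum p y \<le> lpsum p x \<Longrightarrow> lpnorm p y \<le> lpnorm p x"
    unfolding lpnorm_eq_lpsum using assms lpsum_nonneg by (intro powr_mono2) auto
  ultimately show "lpsum p x < lpsum p y"
    by linarith
qed

lemma lpsum_finite_support:
  assumes "finite F" and "\<And>i. i \<notin> F \<Longrightarrow> z i = 0"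
  shows "lpsum p z = (\<Sum>i\<in>F. \<bar>z i\<bar> powr p)"
  unfolding lpsum_def by (rule suminf_finite) (use assms in auto)

lemma lp_summable: "x \<in> lp p I \<Longrightarrow> summable (\<lambda>i. \<bar>x i\<bar> powr p)"
  unfolding lp_def by auto

lemma lp_finite_support:
  assumes "finite F" and "F \<subseteq> I" and "\<And>i. i \<notin> F \<Longrightarrow> z i = 0"
  shows "z \<in> lp p I"
  unfolding lp_def using assms by (auto intro!: summable_finite[of F])

lemma abs_lincomb_powr_le:
  fixes a b u v :: real
  assumes "0 < p"
  shows "\<bar>a * u + b * v\<bar> powr p \<le> 2 powr p * (\<bar>a\<bar> powr p * \<bar>u\<bar> powr p + \<bar>b\<bar> powr p * \<bar>v\<bar> powr p)"
proof -
  define m where "m = max \<bar>a * u\<bar> \<bar>b * v\<bar>"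
  have "\<bar>a * u + b * v\<bar> \<le> 2 * m"
    unfolding m_def by linarith
  then have "\<bar>a * u + b * v\<bar> powr p \<le> (2 * m) powr p"
    using assms by (intro powr_mono2) auto
  also have "\<dots> = 2 powr p * m powr p"
    by (simp add: powr_mult m_def)
  also have "\<dots> \<le> 2 powr p * (\<bar>a * u\<bar> powr p + \<bar>b * v\<bar> powr p)"
    unfolding m_def by (intro mult_left_mono) (auto simp: max_def)
  finally show ?thesis
    by (simp add: abs_mult powr_mult)
qed

lemma summable_lincomb_powr:
  fixes a b :: real and x y :: "nat \<Rightarrow> real"
  assumes "0 < p" and "summable (\<lambda>i. \<bar>x i\<bar> powr p)" and "summable (\<lambda>i. \<bar>y i\<bar> powr p)"
  shows "summable (\<lambda>i. \<bar>a * x i + b * y i\<bar> powr p)"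
proof (rule summable_comparison_test)
  show "\<exists>N. \<forall>n\<ge>N. norm (\<bar>a * x n + b * y n\<bar> powr p)
      \<le> 2 powr p * (\<bar>a\<bar> powr p * \<bar>x n\<bar> powr p + \<bar>b\<bar> powr p * \<bar>y n\<bar> powr p)"
    using abs_lincomb_powr_le[OF assms(1)] by auto
  show "summable (\<lambda>n. 2 powr p * (\<bar>a\<bar> powr p * \<bar>x n\<bar> powr p + \<bar>b\<bar> powr p * \<bar>y n\<bar> powr p))"
    using assms by (intro summable_mult summable_add)
qed

lemma lp_lincomb:
  assumes "0 < p" and "x \<in> lp p I" and "y \<in> lp p I"
  shows "(\<lambda>i. a * x i + b * y i) \<in> lp p I"
  using assms summable_lincomb_powr unfolding lp_def by auto

lemma lp_diff:
  assumes "0 < p" and "x \<in> lp p I" and "y \<in> lp p I"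
  shows "(\<lambda>i. x i - y i) \<in> lp p I"
  using lp_lincomb[OF assms, of 1 "-1"] by simp

lemma abs_le_lpnorm:
  assumes "0 < p" and "summable (\<lambda>i. \<bar>z i\<bar> powr p)"
  shows "\<bar>z i\<bar> \<le> lpnorm p z"
proof -
  have "(\<Sum>j\<in>{i}. \<bar>z j\<bar> powr p) \<le> lpsum p z"
    unfolding lpsum_def using assms(2) by (intro sum_le_suminf) auto
  then have "(\<bar>z i\<bar> powr p) powr (1 / p) \<le> lpsum p z powr (1 / p)"
    using assms(1) by (intro powr_mono2) auto
  then show ?thesis
    using assms(1) by (simp add: powr_powr lpnorm_eq_lpsum)
qed

lemma tendsto_coordinate_if_lpnorm_tendsto:
  assumes "0 < p" and "\<And>n. summable (\<lambda>i. \<bar>xs n i - x i\<bar> powr p)"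
    and "(\<lambda>n. lpnorm p (\<lambda>i. xs n i - x i)) \<longlonglongrightarrow> 0"
  shows "(\<lambda>n. xs n i) \<longlonglongrightarrow> x i"
proof -
  have "(\<lambda>n. xs n i - x i) \<longlonglongrightarrow> 0"
  proof (rule Lim_null_comparison)
    show "\<forall>\<^sub>F n in sequentially. norm (xs n i - x i) \<le> lpnorm p (\<lambda>i. xs n i - x i)"
      using abs_le_lpnorm[OF assms(1,2)] by (intro always_eventually) simp
  qed (rule assms(3))
  then show ?thesis
    by (simp add: LIM_zero_iff)
qed

lemma lpnorm_nonneg: "0 \<le> lpnorm p z"
  unfolding lpnorm_def by simp

lemma pairing_finite_support:
  assumes "finite F" and "\<And>i. i \<notin> F \<Longrightarrow> c i = 0"
  shows "pairing c x = (\<Sum>i\<in>F. c i * x i)"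
  unfolding pairing_def by (rule suminf_finite) (use assms in auto)

lemma pairing_lincomb:
  assumes "summable (\<lambda>i. x i * k i)" and "summable (\<lambda>i. y i * k i)"
  shows "pairing (\<lambda>i. a * x i + b * y i) k = a * pairing x k + b * pairing y k"
proof -
  have "(\<lambda>i. a * (x i * k i) + b * (y i * k i)) sums (a * pairing x k + b * pairing y k)"
    unfolding pairing_def using assms by (intro sums_add sums_mult summable_sums)
  then show ?thesis
    unfolding pairing_def by (simp add: sums_iff algebra_simps)
qed

lemma zero_in_metric_proj_if_polar:
  "x \<in> polar p I K \<Longrightarrow> (\<lambda>i. 0) \<in> metric_proj p K x"
  unfolding polar_def by auto

lemma polar_lpnorm_le:
  assumes "x \<in> polar p I K" and "k \<in> K"
  shows "lpnorm p x \<le> lpnorm p (\<lambda>i. x i - k i)"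
  using zero_in_metric_proj_if_polar[OF assms(1)] assms(2) unfolding metric_proj_def by simp

lemma polar_iff:
  assumes "(\<lambda>i. 0) \<in> K"
  shows "x \<in> polar p I K \<longleftrightarrow>
    x \<in> lp p I \<and> (\<forall>k\<in>K. k \<noteq> (\<lambda>i. 0) \<longrightarrow> lpnorm p x < lpnorm p (\<lambda>i. x i - k i))"
proof
  assume x: "x \<in> polar p I K"
  have "lpnorm p x < lpnorm p (\<lambda>i. x i - k i)" if "k \<in> K" and "k \<noteq> (\<lambda>i. 0)" for k
  proof (rule ccontr)
    assume "\<not> ?thesis"
    then have "lpnorm p (\<lambda>i. x i - k i) \<le> lpnorm p (\<lambda>i. x i - k' i)" if "k' \<in> K" for k'
      using polar_lpnorm_le[OF x that] by linarith
    then have "k \<in> metric_proj p K x"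
      using \<open>k \<in> K\<close> unfolding metric_proj_def by blast
    then show False
      using x \<open>k \<noteq> (\<lambda>i. 0)\<close> unfolding polar_def by blast
  qed
  then show "x \<in> lp p I \<and> (\<forall>k\<in>K. k \<noteq> (\<lambda>i. 0) \<longrightarrow> lpnorm p x < lpnorm p (\<lambda>i. x i - k i))"
    using x unfolding polar_def by blast
next
  assume x: "x \<in> lp p I \<and> (\<forall>k\<in>K. k \<noteq> (\<lambda>i. 0) \<longrightarrow> lpnorm p x < lpnorm p (\<lambda>i. x i - k i))"
  have "lpnorm p x \<le> lpnorm p (\<lambda>i. x i - k i)" if "k \<in> K" for k
    using x that by (cases "k = (\<lambda>i. 0)") (auto simp: less_imp_le)
  then have "(\<lambda>i. 0) \<in> metric_proj p K x"
    using assms unfolding metric_proj_def by simp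
  moreover have "k = (\<lambda>i. 0)" if "k \<in> metric_proj p K x" for k
  proof (rule ccontr)
    assume "k \<noteq> (\<lambda>i. 0)"
    moreover have "k \<in> K" "lpnorm p (\<lambda>i. x i - k i) \<le> lpnorm p x"
      using that assms unfolding metric_proj_def by auto
    ultimately show False
      using x by fastforce
  qed
  ultimately show "x \<in> polar p I K"
    using x unfolding polar_def by blast
qed

lemma lcone_zero: "lcone K \<Longrightarrow> (\<lambda>i. 0) \<in> K"
  unfolding lcone_def by force


section \<open>The Hilbert space case\<close>

lemma summable_mult_if_summable_squares:
  fixes x k :: "nat \<Rightarrow> real"
  assumes "summable (\<lambda>i. (x i)\<^sup>2)" and "summable (\<lambda>i. (k i)\<^sup>2)"
  shows "summable (\<lambda>i. x i * k i)"
proof (rule summable_comparison_test)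
  have "\<bar>x n * k n\<bar> \<le> ((x n)\<^sup>2 + (k n)\<^sup>2) / 2" for n
    using sum_squares_bound[of "\<bar>x n\<bar>" "\<bar>k n\<bar>"] by (simp add: abs_mult)
  then show "\<exists>N. \<forall>n\<ge>N. norm (x n * k n) \<le> ((x n)\<^sup>2 + (k n)\<^sup>2) / 2"
    by auto
  show "summable (\<lambda>n. ((x n)\<^sup>2 + (k n)\<^sup>2) / 2)"
    using assms by (intro summable_divide summable_add)
qed

lemma lpsum_two: "lpsum 2 z = (\<Sum>i. (z i)\<^sup>2)"
  unfolding lpsum_def by simp

lemma lp_two_summable_squares: "x \<in> lp 2 I \<Longrightarrow> summable (\<lambda>i. (x i)\<^sup>2)"
  using lp_summable[of x 2 I] by simp

lemma lpsum_two_diff_scaled: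
  assumes "x \<in> lp 2 I" and "k \<in> lp 2 I"
  shows "lpsum 2 (\<lambda>i. x i - t * k i) = lpsum 2 x - 2 * t * pairing x k + t\<^sup>2 * lpsum 2 k"
proof -
  have x: "summable (\<lambda>i. (x i)\<^sup>2)" and k: "summable (\<lambda>i. (k i)\<^sup>2)"
    using assms lp_two_summable_squares by auto
  have "(\<lambda>i. (x i)\<^sup>2 - 2 * t * (x i * k i) + t\<^sup>2 * (k i)\<^sup>2)
      sums (lpsum 2 x - 2 * t * pairing x k + t\<^sup>2 * lpsum 2 k)"
    unfolding lpsum_two pairing_def
    by (intro sums_add sums_diff sums_mult summable_sums x k summable_mult_if_summable_squares)
  then show ?thesis
    unfolding lpsum_two by (simp add: sums_iff power2_eq_square algebra_simps)
qed

lemma lpnorm_two_less_diff_scaled_iff: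
  assumes x: "x \<in> lp 2 I" and k: "k \<in> lp 2 I"
  shows "lpnorm 2 x < lpnorm 2 (\<lambda>i. x i - t * k i) \<longleftrightarrow> 2 * t * pairing x k < t\<^sup>2 * lpsum 2 k"
proof -
  have "(\<lambda>i. x i - t * k i) \<in> lp 2 I"
    using lp_lincomb[OF _ x k, where a=1 and b="-t"] by simp
  then show ?thesis
    using lpnorm_less_iff[of 2 x "\<lambda>i. x i - t * k i"] lpsum_two_diff_scaled[OF x k, of t]
      lp_summable[OF x] lp_summable[of _ 2 I] by auto
qed

lemma polar_two_pairing_nonpos:
  assumes K: "lcone K" "K \<subseteq> lp 2 I" and x: "x \<in> polar 2 I K" and k: "k \<in> K"
  shows "pairing x k \<le> 0"
proof (rule ccontr)
  assume "\<not> pairing x k \<le> 0"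
  then have P: "0 < pairing x k" by simp
  have k_lp: "k \<in> lp 2 I"
    using k K(2) by auto
  have Q: "0 \<le> lpsum 2 k"
    using lp_summable[OF k_lp] by (rule lpsum_nonneg)
  define t where "t = pairing x k / (lpsum 2 k + 1)"
  have t: "0 < t" "t * lpsum 2 k < pairing x k"
    unfolding t_def using P Q by (auto simp: field_simps)
  have "k \<noteq> (\<lambda>i. 0)"
    using P unfolding pairing_def by auto
  then have "(\<lambda>i. t * k i) \<noteq> (\<lambda>i. 0)"
    using t(1) by (auto simp: fun_eq_iff)
  moreover have "(\<lambda>i. t * k i) \<in> K"
    using K(1) k t(1) unfolding lcone_def by auto
  ultimately have "lpnorm 2 x < lpnorm 2 (\<lambda>i. x i - t * k i)"
    using x polar_iff[OF lcone_zero[OF K(1)]] by blast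
  then have "2 * pairing x k < t * lpsum 2 k"
    using lpnorm_two_less_diff_scaled_iff[OF _ k_lp] x t(1)
    by (auto simp: polar_def power2_eq_square)
  then show False
    using t P by linarith
qed

lemma polar_two_iff:
  assumes K: "lcone K" "K \<subseteq> lp 2 I" and x: "x \<in> lp 2 I"
  shows "x \<in> polar 2 I K \<longleftrightarrow> (\<forall>k\<in>K. pairing x k \<le> 0)"
proof
  assume "x \<in> polar 2 I K"
  then show "\<forall>k\<in>K. pairing x k \<le> 0"
    using polar_two_pairing_nonpos[OF K] by blast
next
  assume nonpos: "\<forall>k\<in>K. pairing x k \<le> 0"
  have "lpnorm 2 x < lpnorm 2 (\<lambda>i. x i - k i)" if "k \<in> K" "k \<noteq> (\<lambda>i. 0)" for k
  proof -
    have k_lp: "k \<in> lp 2 I"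
      using that(1) K(2) by auto
    have "2 * pairing x k < lpsum 2 k"
      using nonpos that lpsum_pos[OF lp_summable[OF k_lp]] by fastforce
    then show ?thesis
      using lpnorm_two_less_diff_scaled_iff[OF x k_lp, of 1] by simp
  qed
  then show "x \<in> polar 2 I K"
    using polar_iff[OF lcone_zero[OF K(1)]] x by blast
qed

lemma lconvex_polar_two:
  assumes K: "lcone K" "K \<subseteq> lp 2 I"
  shows "lconvex (polar 2 I K)"
  unfolding lconvex_def
proof (intro ballI allI impI)
  fix x y and t :: real
  assume x: "x \<in> polar 2 I K" and y: "y \<in> polar 2 I K" and t: "0 \<le> t \<and> t \<le> 1"
  have x_lp: "x \<in> lp 2 I" and y_lp: "y \<in> lp 2 I"
    using x y unfolding polar_def by auto
  have "pairing (\<lambda>i. t * x i + (1 - t) * y i) k \<le> 0" if "k \<in> K" for k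
  proof -
    have "k \<in> lp 2 I"
      using that K(2) by auto
    then have "pairing (\<lambda>i. t * x i + (1 - t) * y i) k = t * pairing x k + (1 - t) * pairing y k"
      using x_lp y_lp by (intro pairing_lincomb summable_mult_if_summable_squares lp_two_summable_squares)
    also have "\<dots> \<le> 0"
      using x y that t polar_two_iff[OF K] x_lp y_lp
      by (intro add_nonpos_nonpos mult_nonneg_nonpos) auto
    finally show ?thesis .
  qed
  moreover have "(\<lambda>i. t * x i + (1 - t) * y i) \<in> lp 2 I"
    using x_lp y_lp by (intro lp_lincomb) auto
  ultimately show "(\<lambda>i. t * x i + (1 - t) * y i) \<in> polar 2 I K"
    using polar_two_iff[OF K] by blast
qed


section \<open>Wedges with finitely supported generators\<close>

lemma deltaE:
  assumes "c \<in> delta p a b"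
  obtains l m where "0 \<le> l" and "0 \<le> m"
    and "c = (\<lambda>i. (l * a i + m * b i) / lpnorm (conj_exp p) (\<lambda>j. l * a j + m * b j))"
  using assms unfolding delta_def by (elim CollectE exE conjE) (rule that)

lemma generators_in_delta:
  assumes "lpnorm (conj_exp p) a = 1" and "lpnorm (conj_exp p) b = 1"
  shows "a \<in> delta p a b" and "b \<in> delta p a b"
proof -
  have "(\<lambda>i. (1 * a i + 0 * b i) / lpnorm (conj_exp p) (\<lambda>j. 1 * a j + 0 * b j)) \<in> delta p a b"
    unfolding delta_def by (rule CollectI, rule exI[of _ 1], rule exI[of _ 0]) auto
  then show "a \<in> delta p a b"
    using assms(1) by simp
  have "(\<lambda>i. (0 * a i + 1 * b i) / lpnorm (conj_exp p) (\<lambda>j. 0 * a j + 1 * b j)) \<in> delta p a b"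
    unfolding delta_def by (rule CollectI, rule exI[of _ 0], rule exI[of _ 1]) auto
  then show "b \<in> delta p a b"
    using assms(2) by simp
qed

lemma wedge_eq_halfspaces:
  assumes "finite F" and "\<And>i. i \<notin> F \<Longrightarrow> a i = 0" and "\<And>i. i \<notin> F \<Longrightarrow> b i = 0"
    and "lpnorm (conj_exp p) a = 1" and "lpnorm (conj_exp p) b = 1"
  shows "wedge p I a b = {x \<in> lp p I. pairing a x \<le> 0 \<and> pairing b x \<le> 0}"
proof (intro set_eqI iffI)
  fix x assume "x \<in> wedge p I a b"
  then show "x \<in> {x \<in> lp p I. pairing a x \<le> 0 \<and> pairing b x \<le> 0}"
    using generators_in_delta[OF assms(4,5)] unfolding wedge_def by blast
next
  fix x assume x: "x \<in> {x \<in> lp p I. pairing a x \<le> 0 \<and> pairing b x \<le> 0}"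
  have "pairing c x \<le> 0" if c_delta: "c \<in> delta p a b" for c
  proof -
    obtain l m where lm: "0 \<le> l" "0 \<le> m"
      and c: "c = (\<lambda>i. (l * a i + m * b i) / lpnorm (conj_exp p) (\<lambda>j. l * a j + m * b j))"
      using c_delta by (rule deltaE)
    define N where "N = lpnorm (conj_exp p) (\<lambda>j. l * a j + m * b j)"
    have "c = (\<lambda>i. (l / N) * a i + (m / N) * b i)"
      unfolding c N_def by (simp add: add_divide_distrib)
    moreover have "summable (\<lambda>i. a i * x i)" and "summable (\<lambda>i. b i * x i)"
      using assms(1-3) by (auto intro: summable_finite[of F])
    then have "pairing (\<lambda>i. (l / N) * a i + (m / N) * b i) x = (l / N) * pairing a x + (m / N) * pairing b x"
      by (rule pairing_lincomb)
    ultimately have "pairing c x = (l / N) * pairing a x + (m / N) * pairing b x"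
      by simp
    also have "\<dots> \<le> 0"
      using x lm lpnorm_nonneg[of "conj_exp p"] unfolding N_def
      by (intro add_nonpos_nonpos mult_nonneg_nonpos) auto
    finally show ?thesis .
  qed
  then show "x \<in> wedge p I a b"
    using x unfolding wedge_def by blast
qed

lemma pairing_lincomb_right:
  assumes "finite F" and "\<And>i. i \<notin> F \<Longrightarrow> c i = 0"
  shows "pairing c (\<lambda>i. s * x i + t * y i) = s * pairing c x + t * pairing c y"
  by (simp add: pairing_finite_support[OF assms] sum.distrib sum_distrib_left algebra_simps)

lemma tendsto_pairing:
  assumes "finite F" and "\<And>i. i \<notin> F \<Longrightarrow> c i = 0" and "\<And>i. (\<lambda>n. xs n i) \<longlonglongrightarrow> x i"
  shows "(\<lambda>n. pairing c (xs n)) \<longlonglongrightarrow> pairing c x"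
proof -
  have "(\<lambda>n. \<Sum>i\<in>F. c i * xs n i) \<longlonglongrightarrow> (\<Sum>i\<in>F. c i * x i)"
    using assms(3) by (intro tendsto_sum tendsto_mult_left)
  then show ?thesis
    by (simp add: pairing_finite_support[OF assms(1,2)])
qed

lemma closed_convex_cone_halfspaces:
  assumes p: "0 < p" and F: "finite F" "\<And>i. i \<notin> F \<Longrightarrow> a i = 0" "\<And>i. i \<notin> F \<Longrightarrow> b i = 0"
  shows "closed_convex_cone p I {x \<in> lp p I. pairing a x \<le> 0 \<and> pairing b x \<le> 0}"
    (is "closed_convex_cone p I ?H")
proof -
  have lincomb: "(\<lambda>i. s * x i + t * y i) \<in> ?H"
    if "x \<in> ?H" "y \<in> ?H" "0 \<le> s" "0 \<le> t" for x y s t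
    using that p pairing_lincomb_right[OF F(1,2)] pairing_lincomb_right[OF F(1,3)]
    by (auto intro!: lp_lincomb add_nonpos_nonpos mult_nonneg_nonpos)
  have "lconvex ?H"
    unfolding lconvex_def using lincomb by simp
  moreover have "(\<lambda>i. 0) \<in> ?H"
    unfolding lp_def pairing_def by simp
  then have "lcone ?H"
    unfolding lcone_def using lincomb[of _ _ _ 0] by fastforce
  moreover have "lp_closed p I ?H"
    unfolding lp_closed_def
  proof (intro allI impI)
    fix xs :: "nat \<Rightarrow> nat \<Rightarrow> real" and x
    assume H: "(\<forall>n. xs n \<in> ?H) \<and> x \<in> lp p I \<and> (\<lambda>n. lpnorm p (\<lambda>i. xs n i - x i)) \<longlonglongrightarrow> 0"
    have "summable (\<lambda>i. \<bar>xs n i - x i\<bar> powr p)" for n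
      using H p by (intro lp_summable[of _ p I] lp_diff) auto
    then have coord: "(\<lambda>n. xs n i) \<longlonglongrightarrow> x i" for i
      using H p by (intro tendsto_coordinate_if_lpnorm_tendsto) auto
    have "(\<lambda>n. pairing a (xs n)) \<longlonglongrightarrow> pairing a x" and "(\<lambda>n. pairing b (xs n)) \<longlonglongrightarrow> pairing b x"
      using F coord by (auto intro: tendsto_pairing)
    then have "pairing a x \<le> 0" and "pairing b x \<le> 0"
      using H LIMSEQ_le_const2 by blast+
    then show "x \<in> ?H"
      using H by auto
  qed
  ultimately show ?thesis
    unfolding closed_convex_cone_def by blast
qed

lemma closed_convex_cone_wedge:
  assumes "0 < p" and "finite F" and "\<And>i. i \<notin> F \<Longrightarrow> a i = 0" and "\<And>i. i \<notin> F \<Longrightarrow> b i = 0"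
    and "lpnorm (conj_exp p) a = 1" and "lpnorm (conj_exp p) b = 1"
  shows "closed_convex_cone p I (wedge p I a b)"
  using closed_convex_cone_halfspaces[OF assms(1-4)] wedge_eq_halfspaces[OF assms(2-6)] by simp

lemma conj_exp_pos: "1 < p \<Longrightarrow> 0 < conj_exp p"
  unfolding conj_exp_def by simp

definition pair_vec :: "nat \<Rightarrow> nat \<Rightarrow> nat \<Rightarrow> real" where
  "pair_vec i j = (\<lambda>n. if n = i \<or> n = j then 1 else 0)"

definition normed_pair_vec :: "real \<Rightarrow> nat \<Rightarrow> nat \<Rightarrow> nat \<Rightarrow> real" where
  "normed_pair_vec q i j = (\<lambda>n. 2 powr (- 1 / q) * pair_vec i j n)"

lemma normed_pair_vec_outside: "n \<notin> {i, j} \<Longrightarrow> normed_pair_vec q i j n = 0"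
  unfolding normed_pair_vec_def pair_vec_def by simp

lemma lpnorm_normed_pair_vec:
  assumes "0 < q" and "i \<noteq> j"
  shows "lpnorm q (normed_pair_vec q i j) = 1"
proof -
  have "(2 powr (- 1 / q)) powr q = 2 powr (- 1)"
    using assms(1) by (simp add: powr_powr)
  then have "lpsum q (normed_pair_vec q i j) = 1"
    using assms(2) by (subst lpsum_finite_support[of "{i, j}"])
      (auto simp: normed_pair_vec_def pair_vec_def powr_minus_divide)
  then show ?thesis
    by (simp add: lpnorm_eq_lpsum)
qed

lemma normed_pair_vec_in_dual_sphere:
  assumes "1 < p" and "i \<noteq> j" and "i \<in> J" and "j \<in> J"
  shows "normed_pair_vec (conj_exp p) i j \<in> dual_sphere p J"
proof -
  have "normed_pair_vec (conj_exp p) i j \<in> lp (conj_exp p) J"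
    using assms(3,4) by (intro lp_finite_support[of "{i, j}"]) (auto simp: normed_pair_vec_def pair_vec_def)
  then show ?thesis
    unfolding dual_sphere_def
    using lpnorm_normed_pair_vec[OF conj_exp_pos[OF assms(1)] assms(2)] by simp
qed

lemma pairing_normed_pair_vec:
  assumes "i \<noteq> j"
  shows "pairing (normed_pair_vec q i j) x = 2 powr (- 1 / q) * (x i + x j)"
  using assms by (subst pairing_finite_support[of "{i, j}"])
    (auto simp: normed_pair_vec_def pair_vec_def algebra_simps)

lemma wedge_normed_pair_vecs:
  assumes "1 < p"
  shows "wedge p I (normed_pair_vec (conj_exp p) 0 1) (normed_pair_vec (conj_exp p) 1 2)
    = {x \<in> lp p I. x 0 + x 1 \<le> 0 \<and> x 1 + x 2 \<le> 0}"
proof -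
  have q: "0 < conj_exp p"
    using assms by (rule conj_exp_pos)
  have "wedge p I (normed_pair_vec (conj_exp p) 0 1) (normed_pair_vec (conj_exp p) 1 2)
    = {x \<in> lp p I. pairing (normed_pair_vec (conj_exp p) 0 1) x \<le> 0
        \<and> pairing (normed_pair_vec (conj_exp p) 1 2) x \<le> 0}"
    by (rule wedge_eq_halfspaces[of "{0, 1, 2}"])
      (auto simp: lpnorm_normed_pair_vec[OF q] normed_pair_vec_outside)
  also have "\<dots> = {x \<in> lp p I. x 0 + x 1 \<le> 0 \<and> x 1 + x 2 \<le> 0}"
    by (simp add: pairing_normed_pair_vec mult_le_0_iff)
  finally show ?thesis .
qed


section \<open>A wedge with non-convex polar\<close>

lemma bernoulli_powr_strict:
  fixes p y :: real
  assumes p: "1 < p" and y: "0 < y" "y \<noteq> 1"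
  shows "1 + p * (y - 1) < y powr p"
proof (cases "1 < y")
  case True
  have der: "\<And>x. 1 \<le> x \<Longrightarrow> x \<le> y \<Longrightarrow> ((\<lambda>x. x powr p) has_real_derivative p * x powr (p - 1)) (at x)"
    by (rule has_real_derivative_powr) auto
  obtain z where z: "1 < z" "z < y" "y powr p - 1 powr p = (y - 1) * (p * z powr (p - 1))"
    using MVT2[OF True der] by blast
  have "1 < z powr (p - 1)"
    using powr_less_mono2[of "p - 1" 1 z] z p by simp
  then have "(y - 1) * p < (y - 1) * (p * z powr (p - 1))"
    using True p by (intro mult_strict_left_mono) auto
  then show ?thesis
    using z by (simp add: algebra_simps)
next
  case False
  then have "y < 1"
    using y by simp
  have der: "\<And>x. y \<le> x \<Longrightarrow> x \<le> 1 \<Longrightarrow> ((\<lambda>x. x powr p) has_real_derivative p * x powr (p - 1)) (at x)"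
    by (rule has_real_derivative_powr) (use y in auto)
  obtain z where z: "y < z" "z < 1" "1 powr p - y powr p = (1 - y) * (p * z powr (p - 1))"
    using MVT2[OF \<open>y < 1\<close> der] by blast
  have "z powr (p - 1) < 1"
    using powr_less_mono2[of "p - 1" z 1] z p y by simp
  then have "(1 - y) * (p * z powr (p - 1)) < (1 - y) * p"
    using \<open>y < 1\<close> p by (intro mult_strict_left_mono) auto
  then show ?thesis
    using z by (simp add: algebra_simps)
qed

lemma bernoulli_abs_powr_strict:
  fixes p s :: real
  assumes "1 < p" and "s \<noteq> 0"
  shows "1 - p * s < \<bar>1 - s\<bar> powr p"
proof (cases "s < 1")
  case True
  then show ?thesis
    using bernoulli_powr_strict[OF assms(1), of "1 - s"] assms(2) by simp
next
  case False
  then have "1 - p * s < 0"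
    using assms(1) by (smt (verit) mult_less_cancel_left2)
  then show ?thesis
    by (smt (verit) powr_ge_zero)
qed

lemma bernoulli_abs_powr:
  fixes p s :: real
  assumes "1 < p"
  shows "1 - p * s \<le> \<bar>1 - s\<bar> powr p"
  using bernoulli_abs_powr_strict[OF assms, of s] by (cases "s = 0") auto

lemma suminf_less_suminf:
  fixes f g :: "nat \<Rightarrow> real"
  assumes "summable f" and "summable g" and "\<And>n. f n \<le> g n" and "f m < g m"
  shows "suminf f < suminf g"
proof -
  have "0 < (\<Sum>n. g n - f n)"
    using assms by (subst suminf_pos_iff) (auto intro: summable_diff)
  then show ?thesis
    using suminf_diff[OF assms(2,1)] by simp
qed

lemma lpsum_pair_vec: "i \<noteq> j \<Longrightarrow> lpsum p (pair_vec i j) = 2"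
  by (subst lpsum_finite_support[of "{i, j}"]) (auto simp: pair_vec_def)

lemma lpsum_pair_vec_diff_gt:
  assumes p: "1 < p" and "i \<noteq> j" and k: "summable (\<lambda>n. \<bar>k n\<bar> powr p)"
    and "k i + k j \<le> 0" and "k \<noteq> (\<lambda>n. 0)"
  shows "2 < lpsum p (\<lambda>n. pair_vec i j n - k n)"
proof -
  define g where "g n = (if n = i \<or> n = j then 1 - p * k n else 0)" for n
  have "summable g"
    unfolding g_def by (rule summable_finite[of "{i, j}"]) auto
  have "suminf g = 2 - p * (k i + k j)"
    unfolding g_def using \<open>i \<noteq> j\<close> by (subst suminf_finite[of "{i, j}"]) (auto simp: algebra_simps)
  then have "2 \<le> suminf g"
    using p \<open>k i + k j \<le> 0\<close> by (simp add: mult_nonneg_nonpos)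
  have diff_summable: "summable (\<lambda>n. \<bar>pair_vec i j n - k n\<bar> powr p)"
    using summable_lincomb_powr[OF _ summable_finite[of "{i, j}"] k, where a=1 and b="-1"] p
    by (simp add: pair_vec_def)
  have le: "g n \<le> \<bar>pair_vec i j n - k n\<bar> powr p" for n
    using bernoulli_abs_powr[OF p, of "k n"] unfolding g_def pair_vec_def by auto
  obtain m where "k m \<noteq> 0"
    using \<open>k \<noteq> (\<lambda>n. 0)\<close> by auto
  then have "g m < \<bar>pair_vec i j m - k m\<bar> powr p"
    using bernoulli_abs_powr_strict[OF p, of "k m"] unfolding g_def pair_vec_def by auto
  then have "suminf g < lpsum p (\<lambda>n. pair_vec i j n - k n)"
    unfolding lpsum_def using \<open>summable g\<close> diff_summable by (intro suminf_less_suminf) (use le in auto)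
  then show ?thesis
    using \<open>2 \<le> suminf g\<close> by linarith
qed

lemma pair_vec_in_polar:
  assumes p: "1 < p" and "i \<noteq> j" "i \<in> I" "j \<in> I" and "(\<lambda>n. 0) \<in> K"
    and K: "\<And>k. k \<in> K \<Longrightarrow> k \<in> lp p I \<and> k i + k j \<le> 0"
  shows "pair_vec i j \<in> polar p I K"
proof -
  have e_lp: "pair_vec i j \<in> lp p I"
    using assms by (intro lp_finite_support[of "{i, j}"]) (auto simp: pair_vec_def)
  have "lpnorm p (pair_vec i j) < lpnorm p (\<lambda>n. pair_vec i j n - k n)"
    if "k \<in> K" "k \<noteq> (\<lambda>n. 0)" for k
  proof -
    have k_lp: "k \<in> lp p I" and "k i + k j \<le> 0"
      using K[OF that(1)] by auto
    then have "lpsum p (pair_vec i j) < lpsum p (\<lambda>n. pair_vec i j n - k n)"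
      using lpsum_pair_vec_diff_gt[OF p \<open>i \<noteq> j\<close> lp_summable[OF k_lp]] that(2)
        lpsum_pair_vec[OF \<open>i \<noteq> j\<close>] by simp
    moreover have "(\<lambda>n. pair_vec i j n - k n) \<in> lp p I"
      using p e_lp k_lp by (intro lp_diff) auto
    ultimately show ?thesis
      using p e_lp by (subst lpnorm_less_iff) (auto intro: lp_summable)
  qed
  then show ?thesis
    using polar_iff[OF \<open>(\<lambda>n. 0) \<in> K\<close>] e_lp by blast
qed

text \<open>The two sides are \<open>\<parallel>(1/2,1,1/2) - (u,-u,u)\<parallel>\<^sub>p\<^sup>p\<close> and \<open>\<parallel>(1/2,1,1/2)\<parallel>\<^sub>p\<^sup>p\<close>.\<close>

lemma exists_midpoint_descent:
  fixes p :: real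
  assumes "1 < p" and "p \<noteq> 2"
  obtains u where "2 * \<bar>1 / 2 - u\<bar> powr p + \<bar>1 + u\<bar> powr p < 2 * (1 / 2) powr p + 1"
proof -
  define g where "g u = 2 * (1 / 2 - u) powr p + (1 + u) powr p" for u :: real
  have der: "(g has_real_derivative p - 2 * p * (1 / 2) powr (p - 1)) (at 0)"
    unfolding g_def by (rule derivative_eq_intros refl | simp)+
  have "(1 / 2 :: real) powr (p - 1) \<noteq> (1 / 2) powr 1"
    using assms by (subst powr_inj) auto
  then have "p - 2 * p * (1 / 2) powr (p - 1) \<noteq> 0"
    using assms(1) by auto
  then have "\<not> (\<forall>u. \<bar>0 - u\<bar> < 1 / 2 \<longrightarrow> g 0 \<le> g u)"
    using DERIV_local_min[OF der, of "1 / 2"] by auto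
  then obtain u where "\<bar>u\<bar> < 1 / 2" and "g u < g 0"
    by auto
  then show ?thesis
    using that[of u] unfolding g_def by simp
qed

lemma midpoint_pair_vecs_not_in_polar:
  assumes p: "1 < p" "p \<noteq> 2" and I: "{0, 1, 2} \<subseteq> I"
  shows "(\<lambda>n. pair_vec 0 1 n / 2 + pair_vec 1 2 n / 2)
    \<notin> polar p I {x \<in> lp p I. x 0 + x 1 \<le> 0 \<and> x 1 + x 2 \<le> 0}"
    (is "?m \<notin> polar p I ?W")
proof
  assume m_polar: "?m \<in> polar p I ?W"
  obtain u where u: "2 * \<bar>1 / 2 - u\<bar> powr p + \<bar>1 + u\<bar> powr p < 2 * (1 / 2) powr p + 1"
    using exists_midpoint_descent[OF p] by blast
  define k :: "nat \<Rightarrow> real" where "k n = (if n = 1 then - u else if n = 0 \<or> n = 2 then u else 0)" for n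
  have "k \<in> ?W"
    using I by (auto intro!: lp_finite_support[of "{0, 1, 2}"] simp: k_def split: if_splits)
  have "lpsum p (\<lambda>n. ?m n - k n) = (\<Sum>n\<in>{0, 1, 2}. \<bar>?m n - k n\<bar> powr p)"
    by (rule lpsum_finite_support) (auto simp: k_def pair_vec_def)
  also have "\<dots> = 2 * \<bar>1 / 2 - u\<bar> powr p + \<bar>1 + u\<bar> powr p"
    by (simp add: k_def pair_vec_def)
  also have "\<dots> < 2 * (1 / 2) powr p + 1"
    by (rule u)
  also have "\<dots> = (\<Sum>n\<in>{0, 1, 2}. \<bar>?m n\<bar> powr p)"
    by (simp add: pair_vec_def)
  also have "\<dots> = lpsum p ?m"
    by (rule lpsum_finite_support[symmetric]) (auto simp: pair_vec_def)
  finally have "lpsum p (\<lambda>n. ?m n - k n) < lpsum p ?m" .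
  moreover have "summable (\<lambda>n. \<bar>?m n - k n\<bar> powr p)" and "summable (\<lambda>n. \<bar>?m n\<bar> powr p)"
    by (rule summable_finite[of "{0, 1, 2}"]; auto simp: k_def pair_vec_def)+
  ultimately have "lpnorm p (\<lambda>n. ?m n - k n) < lpnorm p ?m"
    using lpnorm_less_iff[of p] p(1) by simp
  with polar_lpnorm_le[OF m_polar \<open>k \<in> ?W\<close>] show False
    by simp
qed

lemma not_lconvex_polar_wedge:
  assumes p: "1 < p" "p \<noteq> 2" and I: "{0, 1, 2} \<subseteq> I"
  shows "\<not> lconvex (polar p I {x \<in> lp p I. x 0 + x 1 \<le> 0 \<and> x 1 + x 2 \<le> 0})"
    (is "\<not> lconvex (polar p I ?W)")
proof
  assume "lconvex (polar p I ?W)"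
  moreover have "(\<lambda>n. 0) \<in> ?W"
    unfolding lp_def by simp
  then have "pair_vec 0 1 \<in> polar p I ?W" and "pair_vec 1 2 \<in> polar p I ?W"
    using p I by (auto intro!: pair_vec_in_polar)
  ultimately have "\<forall>t. 0 \<le> t \<and> t \<le> 1 \<longrightarrow>
      (\<lambda>n. t * pair_vec 0 1 n + (1 - t) * pair_vec 1 2 n) \<in> polar p I ?W"
    unfolding lconvex_def by blast
  then have "(\<lambda>n. 1 / 2 * pair_vec 0 1 n + (1 - 1 / 2) * pair_vec 1 2 n) \<in> polar p I ?W"
    by (rule allE[of _ "1 / 2"]) simp
  then show False
    using midpoint_pair_vecs_not_in_polar[OF p I] by simp
qed

theorem mainTheorem8:
  fixes p :: real
  assumes "1 < p"
  shows "((\<forall>K. closed_convex_cone p UNIV K \<longrightarrow> lconvex (polar p UNIV K)) \<longleftrightarrow> p = 2)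
    \<and> (p \<noteq> 2 \<longrightarrow>
        (\<exists>a b. a \<in> dual_sphere p {0,1,2} \<and> b \<in> dual_sphere p {0,1,2} \<and>
               b \<noteq> a \<and> b \<noteq> (\<lambda>i. - a i) \<and>
               \<not> lconvex (polar p UNIV (wedge p UNIV a b)) \<and>
               \<not> lconvex (polar p {0,1,2} (wedge p {0,1,2} a b))))"
proof -
  define a where "a = normed_pair_vec (conj_exp p) 0 1"
  define b where "b = normed_pair_vec (conj_exp p) 1 2"
  have sphere: "a \<in> dual_sphere p {0, 1, 2}" "b \<in> dual_sphere p {0, 1, 2}"
    unfolding a_def b_def using assms by (auto intro: normed_pair_vec_in_dual_sphere)
  have "b 0 \<noteq> a 0" and "b 1 \<noteq> - a 1"
    unfolding a_def b_def normed_pair_vec_def pair_vec_def by simp_all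
  then have distinct: "b \<noteq> a" "b \<noteq> (\<lambda>i. - a i)"
    by auto
  have cone: "closed_convex_cone p UNIV (wedge p UNIV a b)"
    using sphere assms unfolding dual_sphere_def a_def b_def
    by (intro closed_convex_cone_wedge[of p "{0, 1, 2}"]) (auto simp: normed_pair_vec_outside)
  have not_convex: "\<not> lconvex (polar p I (wedge p I a b))" if "p \<noteq> 2" "{0, 1, 2} \<subseteq> I" for I
    unfolding a_def b_def wedge_normed_pair_vecs[OF assms]
    using not_lconvex_polar_wedge assms that by blast
  have "lconvex (polar 2 UNIV K)" if "closed_convex_cone 2 UNIV K" for K
    using that unfolding closed_convex_cone_def by (intro lconvex_polar_two) auto
  then show ?thesis
    using cone not_convex[of UNIV] not_convex[of "{0, 1, 2}"] sphere distinct by auto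
qed

end
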